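(* Let $(\mathfrak D,d)$ be a finite metric space, $p\in(1,\infty)$, $\vartheta\in\mathcal P(\mathfrak D)$, $\{\mu_k\}_{k\in\mathbb{N}}$ a countable dense subset of $(\mathcal P(\mathfrak D),W_p)$, and for each $k$ let $(\varphi_k,\psi_k)$ be functions on $\mathfrak D$ with $\psi_k=\varphi_k^c$, $\varphi_k=\psi_k^c$ and $W_p^p(\vartheta,\mu_k)=\int\varphi_k\,d\mu_k+\int\psi_k\,d\vartheta$. With $G_I(\mu):=\max_{k\in I}(\int\varphi_kd\mu+\int\psi_kd\vartheta)$ and $F(\mu):=W_p^p(\vartheta,\mu)$, \[\sup_{\mu\in\mathcal P(\mathfrak D)}|F(\mu)-G_{\{1,\dots,j\}}(\mu)|\to0\qquad\text{as }j\to\infty.\]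
   Context: $\mathcal P(\mathfrak D)$ is the set of probability measures on $\mathfrak D$, $W_p$ the $p$-Wasserstein distance with cost $d^p$; $\varphi^c(x):=\inf_{y\in\mathfrak D}(d(x,y)^p-\varphi(y))$. *)

theory Defs
  imports "HOL-Probability.Probability"
begin

text \<open>Finite metric space: a finite type of class metric_space. Probability measures: 'a pmf.\<close>

definition integ :: "'a pmf \<Rightarrow> ('a \<Rightarrow> real) \<Rightarrow> real" where
  "integ \<mu> f = measure_pmf.expectation \<mu> f"

definition couplings :: "'a pmf \<Rightarrow> 'b pmf \<Rightarrow> ('a \<times> 'b) pmf set" where
  "couplings \<mu> \<nu> = {\<pi>. map_pmf fst \<pi> = \<mu> \<and> map_pmf snd \<pi> = \<nu>}"

definition wass_pow :: "real \<Rightarrow> ('a::metric_space) pmf \<Rightarrow> 'a pmf \<Rightarrow> real" where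
  "wass_pow p \<mu> \<nu> = (INF \<pi>\<in>couplings \<mu> \<nu>. integ \<pi> (\<lambda>(x,y). dist x y powr p))"

definition wass :: "real \<Rightarrow> ('a::metric_space) pmf \<Rightarrow> 'a pmf \<Rightarrow> real" where
  "wass p \<mu> \<nu> = wass_pow p \<mu> \<nu> powr (1 / p)"

definition c_transform :: "real \<Rightarrow> (('a::metric_space) \<Rightarrow> real) \<Rightarrow> 'a \<Rightarrow> real" where
  "c_transform p \<phi> x = (INF y. dist x y powr p - \<phi> y)"

end

(* Weak duality gives G_k <= F for every k.  On a finite space the cost d^p satisfies a
   quasi-triangle inequality d(x,z)^p <= d(x,y)^p + K d(y,z)^p, so the c-concave potential
   phi_k = psi_k^c is K-Lipschitz for the cost, and F - G_k, which vanishes at mu_k, obeys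
   F(nu) - G_k(nu) <= 2 K W_p^p(mu_k, nu).  The probability simplex is compact and W_p^p is
   dominated by the l1 distance, so by density finitely many mu_1, ..., mu_J come uniformly
   W_p^p-close to every nu, which makes the error of the maximum over {1..j} uniformly small
   for all j >= J. *)

theory Submission
  imports Defs
begin

lemma integrable_measure_pmf_finite_type [simp]:
  "integrable (measure_pmf (M :: 'a::finite pmf)) (f :: 'a \<Rightarrow> real)"
  by (rule integrable_measure_pmf_finite) simp

lemma integ_map_pmf: "integ (map_pmf f \<pi>) g = integ \<pi> (\<lambda>z. g (f z))"
  unfolding integ_def by simp

lemma integ_add: "integ (\<pi> :: 'a::finite pmf) (\<lambda>z. f z + g z) = integ \<pi> f + integ \<pi> g"
  unfolding integ_def by (rule Bochner_Integration.integral_add) auto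

lemma integ_diff: "integ (\<pi> :: 'a::finite pmf) (\<lambda>z. f z - g z) = integ \<pi> f - integ \<pi> g"
  unfolding integ_def by (rule Bochner_Integration.integral_diff) auto

lemma integ_cmult: "integ (\<pi> :: 'a::finite pmf) (\<lambda>z. c * f z) = c * integ \<pi> f"
  unfolding integ_def by simp

lemma integ_mono:
  "(\<And>z. z \<in> set_pmf \<pi> \<Longrightarrow> f z \<le> g z) \<Longrightarrow> integ (\<pi> :: 'a::finite pmf) f \<le> integ \<pi> g"
  unfolding integ_def by (rule integral_mono_AE) (auto simp: AE_measure_pmf_iff)

lemma pair_pmf_in_couplings: "pair_pmf \<alpha> \<beta> \<in> couplings \<alpha> \<beta>"
  by (simp add: couplings_def map_fst_pair_pmf map_snd_pair_pmf)

lemma couplings_glue: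
  assumes "\<pi>\<^sub>1 \<in> couplings \<alpha> \<beta>" "\<pi>\<^sub>2 \<in> couplings \<beta> \<gamma>"
  obtains \<tau> where "\<And>u v. (u, v) \<in> set_pmf \<tau> \<Longrightarrow> snd u = fst v"
    and "map_pmf fst \<tau> = \<pi>\<^sub>1" and "map_pmf snd \<tau> = \<pi>\<^sub>2"
proof -
  have "rel_pmf (\<lambda>u y. snd u = y) \<pi>\<^sub>1 (map_pmf snd \<pi>\<^sub>1)"
    by (simp add: pmf.rel_map pmf.rel_refl)
  moreover have "rel_pmf (\<lambda>y v. y = fst v) (map_pmf fst \<pi>\<^sub>2) \<pi>\<^sub>2"
    by (simp add: pmf.rel_map pmf.rel_refl)
  moreover have "map_pmf snd \<pi>\<^sub>1 = map_pmf fst \<pi>\<^sub>2"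
    using assms by (simp add: couplings_def)
  ultimately have "rel_pmf ((\<lambda>u y. snd u = y) OO (\<lambda>y v. y = fst v)) \<pi>\<^sub>1 \<pi>\<^sub>2"
    unfolding pmf.rel_compp by auto
  then have "rel_pmf (\<lambda>u v. snd u = fst v) \<pi>\<^sub>1 \<pi>\<^sub>2"
    by (simp add: OO_def)
  then show ?thesis
    unfolding pmf.in_rel using that by auto
qed

lemma embed_pmf_in_couplings:
  fixes f :: "'a::finite \<times> 'b::finite \<Rightarrow> real"
  assumes nonneg: "\<And>z. 0 \<le> f z"
    and rows: "\<And>x. (\<Sum>y\<in>UNIV. f (x, y)) = pmf \<alpha> x"
    and cols: "\<And>y. (\<Sum>x\<in>UNIV. f (x, y)) = pmf \<beta> y"
  shows "embed_pmf f \<in> couplings \<alpha> \<beta>" and "pmf (embed_pmf f) = f"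
proof -
  have "(\<Sum>z\<in>UNIV. f z) = (\<Sum>x\<in>UNIV. \<Sum>y\<in>UNIV. f (x, y))"
    by (simp add: sum.cartesian_product)
  then have "(\<Sum>z\<in>UNIV. f z) = 1"
    by (simp add: rows sum_pmf_eq_1)
  then have "(\<integral>\<^sup>+z. ennreal (f z) \<partial>count_space UNIV) = 1"
    by (simp add: nn_integral_count_space_finite sum_ennreal nonneg)
  then show pmf_eq: "pmf (embed_pmf f) = f"
    by (intro ext pmf_embed_pmf[OF nonneg])
  have fst: "pmf (map_pmf fst (embed_pmf f)) x = pmf \<alpha> x" for x
  proof -
    have "pmf (map_pmf fst (embed_pmf f)) x = sum f (fst -` {x})"
      by (simp add: pmf_map measure_measure_pmf_finite pmf_eq)
    also have "fst -` {x} = Pair x ` UNIV"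
      by auto
    finally show ?thesis
      by (simp add: sum.reindex inj_on_def rows)
  qed
  have snd: "pmf (map_pmf snd (embed_pmf f)) y = pmf \<beta> y" for y
  proof -
    have "pmf (map_pmf snd (embed_pmf f)) y = sum f (snd -` {y})"
      by (simp add: pmf_map measure_measure_pmf_finite pmf_eq)
    also have "snd -` {y} = (\<lambda>x. (x, y)) ` UNIV"
      by auto
    finally show ?thesis
      by (simp add: sum.reindex inj_on_def cols)
  qed
  show "embed_pmf f \<in> couplings \<alpha> \<beta>"
    unfolding couplings_def using fst snd by (auto intro: pmf_eqI)
qed

lemma integ_cost_nonneg: "0 \<le> integ \<pi> (\<lambda>(x, y). dist x y powr p)"
  unfolding integ_def by (rule integral_nonneg_AE) auto

lemma wass_pow_le_integ:
  "\<pi> \<in> couplings \<alpha> \<beta> \<Longrightarrow> wass_pow p \<alpha> \<beta> \<le> integ \<pi> (\<lambda>(x, y). dist x y powr p)"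
  unfolding wass_pow_def by (rule cINF_lower) (auto intro: bdd_belowI[where m = 0] integ_cost_nonneg)

lemma wass_pow_greatest:
  "(\<And>\<pi>. \<pi> \<in> couplings \<alpha> \<beta> \<Longrightarrow> B \<le> integ \<pi> (\<lambda>(x, y). dist x y powr p)) \<Longrightarrow> B \<le> wass_pow p \<alpha> \<beta>"
  unfolding wass_pow_def by (rule cINF_greatest) (use pair_pmf_in_couplings in auto)

lemma le_mult_wass_pow:
  assumes "0 \<le> K"
    and "\<And>\<pi>. \<pi> \<in> couplings \<alpha> \<beta> \<Longrightarrow> X \<le> K * integ \<pi> (\<lambda>(x, y). dist x y powr p)"
  shows "X \<le> K * wass_pow p \<alpha> \<beta>"
proof (cases "K = 0")
  case True
  then show ?thesis using assms(2)[OF pair_pmf_in_couplings] by simp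
next
  case False
  then have "X / K \<le> wass_pow p \<alpha> \<beta>"
    using assms by (intro wass_pow_greatest) (simp add: divide_le_eq mult.commute)
  then show ?thesis using False assms(1) by (simp add: divide_le_eq mult.commute)
qed

lemma wass_pow_less_if_wass_less:
  assumes "0 < p" "0 < \<eta>" "wass p \<alpha> \<beta> < \<eta> powr (1 / p)"
  shows "wass_pow p \<alpha> \<beta> < \<eta>"
proof (rule ccontr)
  assume "\<not> wass_pow p \<alpha> \<beta> < \<eta>"
  then have "\<eta> powr (1 / p) \<le> wass_pow p \<alpha> \<beta> powr (1 / p)"
    using assms by (intro powr_mono2) auto
  then show False using assms(3) unfolding wass_def by simp
qed

lemma finite_cost_quasi_triangle:
  obtains K where "0 \<le> K"
    and "\<And>x y z :: 'a::{metric_space,finite}. dist x z powr p \<le> dist x y powr p + K * dist y z powr p"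
proof
  define K where "K = Max (range (\<lambda>(x :: 'a, y :: 'a, z :: 'a). dist x z powr p / dist y z powr p))"
  have ratio: "dist x z powr p / dist y z powr p \<le> K" for x y z :: 'a
    unfolding K_def by (rule Max_ge) (auto intro: image_eqI[where x = "(x, y, z)"])
  show "0 \<le> K" using ratio[of undefined undefined undefined] by simp
  show "dist x z powr p \<le> dist x y powr p + K * dist y z powr p" for x y z :: 'a
  proof (cases "y = z")
    case False
    then have "0 < dist y z powr p" by simp
    then have "dist x z powr p \<le> K * dist y z powr p"
      using ratio[where x = x and y = y and z = z] by (simp add: divide_le_eq)
    then show ?thesis by (simp add: add_increasing)
  qed simp
qed

lemma wass_pow_quasi_triangle:
  fixes \<alpha> \<beta> \<gamma> :: "'a::{metric_space,finite} pmf"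
  assumes "0 \<le> K"
    and tri: "\<And>x y z :: 'a. dist x z powr p \<le> dist x y powr p + K * dist y z powr p"
  shows "wass_pow p \<alpha> \<gamma> \<le> wass_pow p \<alpha> \<beta> + K * wass_pow p \<beta> \<gamma>"
proof -
  let ?cost = "\<lambda>\<pi>. integ \<pi> (\<lambda>(x, y). dist x y powr p)"
  have "wass_pow p \<alpha> \<gamma> - wass_pow p \<alpha> \<beta> \<le> K * ?cost \<pi>\<^sub>2" if \<pi>\<^sub>2: "\<pi>\<^sub>2 \<in> couplings \<beta> \<gamma>" for \<pi>\<^sub>2
  proof -
    have "wass_pow p \<alpha> \<gamma> - K * ?cost \<pi>\<^sub>2 \<le> wass_pow p \<alpha> \<beta>"
    proof (rule wass_pow_greatest)
      fix \<pi>\<^sub>1 assume \<pi>\<^sub>1: "\<pi>\<^sub>1 \<in> couplings \<alpha> \<beta>"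
      obtain \<tau> where glued: "\<And>u v. (u, v) \<in> set_pmf \<tau> \<Longrightarrow> snd u = fst v"
        and \<tau>: "map_pmf fst \<tau> = \<pi>\<^sub>1" "map_pmf snd \<tau> = \<pi>\<^sub>2"
        using couplings_glue[OF \<pi>\<^sub>1 \<pi>\<^sub>2] by blast
      let ?\<rho> = "map_pmf (\<lambda>(u, v). (fst u, snd v)) \<tau>"
      have "?\<rho> \<in> couplings \<alpha> \<gamma>"
        using \<pi>\<^sub>1 \<pi>\<^sub>2 unfolding couplings_def \<tau>[symmetric]
        by (simp add: pmf.map_comp o_def split_beta')
      then have "wass_pow p \<alpha> \<gamma> \<le> ?cost ?\<rho>"
        by (rule wass_pow_le_integ)
      also have "\<dots> = integ \<tau> (\<lambda>(u, v). dist (fst u) (snd v) powr p)"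
        by (simp add: integ_map_pmf split_beta')
      also have "\<dots> \<le> integ \<tau> (\<lambda>(u, v). dist (fst u) (snd u) powr p + K * dist (fst v) (snd v) powr p)"
        by (rule integ_mono) (use tri glued in fastforce)
      also have "\<dots> = ?cost \<pi>\<^sub>1 + K * ?cost \<pi>\<^sub>2"
        unfolding \<tau>[symmetric] by (simp add: integ_map_pmf integ_add integ_cmult split_beta')
      finally show "wass_pow p \<alpha> \<gamma> - K * ?cost \<pi>\<^sub>2 \<le> ?cost \<pi>\<^sub>1"
        by simp
    qed
    then show ?thesis by simp
  qed
  then have "wass_pow p \<alpha> \<gamma> - wass_pow p \<alpha> \<beta> \<le> K * wass_pow p \<beta> \<gamma>"
    by (rule le_mult_wass_pow[OF \<open>0 \<le> K\<close>])
  then show ?thesis by simp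
qed

lemma integ_diff_le_wass_pow:
  fixes \<alpha> \<beta> :: "'a::{metric_space,finite} pmf"
  assumes "0 \<le> K" and lip: "\<And>y z. \<phi> y - \<phi> z \<le> K * dist y z powr p"
  shows "integ \<alpha> \<phi> - integ \<beta> \<phi> \<le> K * wass_pow p \<alpha> \<beta>"
proof (rule le_mult_wass_pow[OF \<open>0 \<le> K\<close>])
  fix \<pi> assume "\<pi> \<in> couplings \<alpha> \<beta>"
  then have marg: "map_pmf fst \<pi> = \<alpha>" "map_pmf snd \<pi> = \<beta>"
    by (auto simp: couplings_def)
  have "integ \<alpha> \<phi> - integ \<beta> \<phi> = integ \<pi> (\<lambda>(y, z). \<phi> y - \<phi> z)"
    unfolding marg[symmetric] by (simp add: integ_map_pmf integ_diff split_beta')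
  also have "\<dots> \<le> integ \<pi> (\<lambda>(y, z). K * dist y z powr p)"
    by (rule integ_mono) (auto simp: lip)
  finally show "integ \<alpha> \<phi> - integ \<beta> \<phi> \<le> K * integ \<pi> (\<lambda>(y, z). dist y z powr p)"
    by (simp add: integ_cmult split_beta')
qed

lemma kantorovich_weak_duality:
  fixes \<theta> \<nu> :: "'a::{metric_space,finite} pmf"
  assumes "\<And>x y. \<psi> x + \<phi> y \<le> dist x y powr p"
  shows "integ \<theta> \<psi> + integ \<nu> \<phi> \<le> wass_pow p \<theta> \<nu>"
proof (rule wass_pow_greatest)
  fix \<pi> assume "\<pi> \<in> couplings \<theta> \<nu>"
  then have marg: "map_pmf fst \<pi> = \<theta>" "map_pmf snd \<pi> = \<nu>"
    by (auto simp: couplings_def)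
  have "integ \<theta> \<psi> + integ \<nu> \<phi> = integ \<pi> (\<lambda>(x, y). \<psi> x + \<phi> y)"
    unfolding marg[symmetric] by (simp add: integ_map_pmf integ_add split_beta')
  also have "\<dots> \<le> integ \<pi> (\<lambda>(x, y). dist x y powr p)"
    by (rule integ_mono) (auto simp: assms)
  finally show "integ \<theta> \<psi> + integ \<nu> \<phi> \<le> integ \<pi> (\<lambda>(x, y). dist x y powr p)" .
qed

lemma c_transform_le: "c_transform p \<phi> x \<le> dist x y powr p - \<phi> (y :: 'a::{metric_space,finite})"
  unfolding c_transform_def by (rule cINF_lower) (auto intro: bdd_below_finite)

lemma integ_c_transform_le_wass_pow:
  fixes \<theta> \<nu> :: "'a::{metric_space,finite} pmf"
  shows "integ \<theta> (c_transform p \<phi>) + integ \<nu> \<phi> \<le> wass_pow p \<theta> \<nu>"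
  using c_transform_le by (intro kantorovich_weak_duality) (simp add: le_diff_eq)

lemma c_transform_attained:
  obtains y :: "'a::{metric_space,finite}" where "c_transform p \<phi> x = dist x y powr p - \<phi> y"
proof -
  let ?R = "range (\<lambda>y :: 'a. dist x y powr p - \<phi> y)"
  have "c_transform p \<phi> x = Min ?R"
    unfolding c_transform_def by (rule cInf_eq_Min) auto
  moreover have "Min ?R \<in> ?R"
    by (rule Min_in) auto
  then obtain y where "Min ?R = dist x y powr p - \<phi> y"
    by blast
  ultimately show thesis
    by (intro that[of y]) simp
qed

lemma c_transform_diff_le:
  fixes y z :: "'a::{metric_space,finite}"
  assumes tri: "\<And>x y z :: 'a. dist x z powr p \<le> dist x y powr p + K * dist y z powr p"
  shows "c_transform p \<psi> y - c_transform p \<psi> z \<le> K * dist y z powr p"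
proof -
  obtain w where w: "c_transform p \<psi> z = dist z w powr p - \<psi> w"
    by (rule c_transform_attained)
  have "c_transform p \<psi> y \<le> dist y w powr p - \<psi> w"
    by (rule c_transform_le)
  moreover have "dist w y powr p \<le> dist w z powr p + K * dist z y powr p"
    by (rule tri)
  ultimately show ?thesis
    using w by (simp add: dist_commute)
qed

lemma dual_gap_le_wass_pow:
  fixes \<theta> \<mu> \<nu> :: "'a::{metric_space,finite} pmf"
  assumes "0 \<le> K"
    and tri: "\<And>x y z :: 'a. dist x z powr p \<le> dist x y powr p + K * dist y z powr p"
    and "\<phi> = c_transform p \<psi>"
    and opt: "wass_pow p \<theta> \<mu> = integ \<mu> \<phi> + integ \<theta> \<psi>"
  shows "wass_pow p \<theta> \<nu> - (integ \<nu> \<phi> + integ \<theta> \<psi>) \<le> 2 * K * wass_pow p \<mu> \<nu>"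
proof -
  have "wass_pow p \<theta> \<nu> \<le> wass_pow p \<theta> \<mu> + K * wass_pow p \<mu> \<nu>"
    by (rule wass_pow_quasi_triangle[OF \<open>0 \<le> K\<close> tri])
  moreover have "integ \<mu> \<phi> - integ \<nu> \<phi> \<le> K * wass_pow p \<mu> \<nu>"
    using \<open>0 \<le> K\<close> c_transform_diff_le[OF tri] unfolding \<open>\<phi> = _\<close>
    by (rule integ_diff_le_wass_pow)
  ultimately show ?thesis
    using opt by simp
qed

lemma overlap_coupling:
  fixes \<alpha> \<beta> :: "'a::finite pmf"
  obtains \<pi> where "\<pi> \<in> couplings \<alpha> \<beta>"
    and "(\<Sum>z\<in>{z. fst z \<noteq> snd z}. pmf \<pi> z) \<le> (\<Sum>x\<in>UNIV. \<bar>pmf \<alpha> x - pmf \<beta> x\<bar>)"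
proof -
  define m where "m x = min (pmf \<alpha> x) (pmf \<beta> x)" for x
  define a where "a x = pmf \<alpha> x - m x" for x
  define b where "b x = pmf \<beta> x - m x" for x
  define t where "t = (\<Sum>x\<in>UNIV. a x)"
  have a0: "0 \<le> a x" and b0: "0 \<le> b x" and m0: "0 \<le> m x" for x
    by (auto simp: a_def b_def m_def)
  have sum_b: "(\<Sum>x\<in>UNIV. b x) = t"
    by (simp add: t_def a_def b_def sum_subtractf sum_pmf_eq_1)
  have "0 \<le> t"
    unfolding t_def by (rule sum_nonneg) (simp add: a0)
  \<comment> \<open>If \<open>t = 0\<close> then \<open>a = b = 0\<close>, so the division by zero below is harmless.\<close>
  have a_eq: "a x * t / t = a x" for x
    using a0 unfolding t_def by (cases "t = 0") (auto simp: t_def sum_nonneg_eq_0_iff)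
  have b_eq: "t * b y / t = b y" for y
    using b0 sum_b by (cases "t = 0") (auto simp: sum_nonneg_eq_0_iff)
  \<comment> \<open>Keep the common mass \<open>m\<close> on the diagonal and transport the excess of \<open>\<alpha>\<close> to the excess of \<open>\<beta>\<close> independently.\<close>
  define f where "f z = (if fst z = snd z then m (fst z) else 0) + a (fst z) * b (snd z) / t" for z
  have f0: "0 \<le> f z" for z
    unfolding f_def using a0 b0 m0 \<open>0 \<le> t\<close> by auto
  have rows: "(\<Sum>y\<in>UNIV. f (x, y)) = pmf \<alpha> x" for x
  proof -
    have "(\<Sum>y\<in>UNIV. f (x, y)) = m x + a x * t / t"
      by (simp add: f_def sum.distrib sum_divide_distrib[symmetric] sum_distrib_left[symmetric] sum_b)
    then show ?thesis unfolding a_eq by (simp add: a_def)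
  qed
  have cols: "(\<Sum>x\<in>UNIV. f (x, y)) = pmf \<beta> y" for y
  proof -
    have "(\<Sum>x\<in>UNIV. f (x, y)) = m y + t * b y / t"
      by (simp add: f_def sum.distrib sum_divide_distrib[symmetric] sum_distrib_right[symmetric] t_def)
    then show ?thesis unfolding b_eq by (simp add: b_def)
  qed
  have "(\<Sum>z\<in>{z. fst z \<noteq> snd z}. f z) = (\<Sum>(x, y)\<in>{z. fst z \<noteq> snd z}. a x * b y / t)"
    by (rule sum.cong) (auto simp: f_def)
  also have "\<dots> \<le> (\<Sum>(x, y)\<in>UNIV. a x * b y / t)"
    using a0 b0 \<open>0 \<le> t\<close> by (intro sum_mono2) auto
  also have "\<dots> = (\<Sum>x\<in>UNIV. \<Sum>y\<in>UNIV. a x * b y / t)"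
    by (simp add: sum.cartesian_product)
  also have "\<dots> = t"
    by (simp add: sum_divide_distrib[symmetric] sum_distrib_left[symmetric] sum_b a_eq
        sum_distrib_right[symmetric] flip: t_def)
  also have "\<dots> \<le> (\<Sum>x\<in>UNIV. \<bar>pmf \<alpha> x - pmf \<beta> x\<bar>)"
    unfolding t_def by (intro sum_mono) (auto simp: a_def m_def)
  finally show thesis
    using embed_pmf_in_couplings[OF f0 rows cols] by (intro that[of "embed_pmf f"]) auto
qed

lemma wass_pow_le_offdiag_mass:
  fixes \<alpha> \<beta> :: "'a::{metric_space,finite} pmf"
  assumes "\<pi> \<in> couplings \<alpha> \<beta>" and D: "\<And>x y :: 'a. dist x y powr p \<le> D"
  shows "wass_pow p \<alpha> \<beta> \<le> D * (\<Sum>z\<in>{z. fst z \<noteq> snd z}. pmf \<pi> z)"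
proof -
  have "wass_pow p \<alpha> \<beta> \<le> integ \<pi> (\<lambda>(x, y). dist x y powr p)"
    by (rule wass_pow_le_integ[OF assms(1)])
  also have "\<dots> = (\<Sum>z\<in>{z. fst z \<noteq> snd z}. (case z of (x, y) \<Rightarrow> dist x y powr p) * pmf \<pi> z)"
    unfolding integ_def by (rule integral_measure_pmf_real) auto
  also have "\<dots> \<le> (\<Sum>z\<in>{z. fst z \<noteq> snd z}. D * pmf \<pi> z)"
    by (intro sum_mono mult_right_mono) (auto simp: D split: prod.split)
  finally show ?thesis
    by (simp add: sum_distrib_left)
qed

lemma wass_pow_le_l1_dist:
  fixes \<alpha> \<beta> :: "'a::{metric_space,finite} pmf"
  assumes D: "\<And>x y :: 'a. dist x y powr p \<le> D"
  shows "wass_pow p \<alpha> \<beta> \<le> D * (\<Sum>x\<in>UNIV. \<bar>pmf \<alpha> x - pmf \<beta> x\<bar>)"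
proof -
  obtain \<pi> where \<pi>: "\<pi> \<in> couplings \<alpha> \<beta>"
    and mass: "(\<Sum>z\<in>{z. fst z \<noteq> snd z}. pmf \<pi> z) \<le> (\<Sum>x\<in>UNIV. \<bar>pmf \<alpha> x - pmf \<beta> x\<bar>)"
    by (rule overlap_coupling)
  have "0 \<le> D"
    using D[of undefined undefined] by simp
  with wass_pow_le_offdiag_mass[OF \<pi> D] mass show ?thesis
    by (meson mult_left_mono order_trans)
qed

lemma compact_range_pmf_vec: "compact (range (\<lambda>\<nu> :: 'a::finite pmf. \<chi> x. pmf \<nu> x))"
proof -
  let ?S = "{v :: real^'a. (\<forall>x. 0 \<le> v $ x) \<and> (\<Sum>x\<in>UNIV. v $ x) = 1}"
  have "range (\<lambda>\<nu> :: 'a pmf. \<chi> x. pmf \<nu> x) = ?S"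
  proof (intro equalityI subsetI)
    fix v assume "v \<in> range (\<lambda>\<nu> :: 'a pmf. \<chi> x. pmf \<nu> x)"
    then show "v \<in> ?S" by (auto simp: sum_pmf_eq_1)
  next
    fix v assume v: "v \<in> ?S"
    then have "(\<integral>\<^sup>+x. ennreal (v $ x) \<partial>count_space UNIV) = 1"
      by (simp add: nn_integral_count_space_finite sum_ennreal)
    then have "pmf (embed_pmf (\<lambda>x. v $ x)) = (\<lambda>x. v $ x)"
      using v by (intro ext pmf_embed_pmf) auto
    then show "v \<in> range (\<lambda>\<nu> :: 'a pmf. \<chi> x. pmf \<nu> x)"
      by (intro image_eqI[where x = "embed_pmf (\<lambda>x. v $ x)"]) (simp_all add: vec_eq_iff)
  qed
  moreover have "bounded ?S"
    unfolding bounded_iff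
  proof (intro exI[of _ 1] ballI)
    fix v assume "v \<in> ?S"
    then have "(\<Sum>x\<in>UNIV. \<bar>v $ x\<bar>) = 1" by auto
    then show "norm v \<le> 1" using norm_le_l1_cart[of v] by simp
  qed
  moreover have "closed ?S"
    by (intro closed_Collect_conj closed_Collect_all closed_Collect_le closed_Collect_eq continuous_intros)
  ultimately show ?thesis
    by (metis compact_eq_bounded_closed)
qed

lemma finite_pmf_net:
  assumes "0 < \<rho>"
  obtains C :: "'a::finite pmf set"
  where "finite C" and "\<And>\<nu>. \<exists>c\<in>C. \<forall>x. \<bar>pmf c x - pmf \<nu> x\<bar> < \<rho>"
proof -
  let ?vec = "\<lambda>\<nu> :: 'a pmf. \<chi> x. pmf \<nu> x"
  have "\<exists>V. finite V \<and> V \<subseteq> range ?vec \<and> range ?vec \<subseteq> (\<Union>v\<in>V. ball v \<rho>)"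
    using seq_compact_imp_totally_bounded[OF compact_imp_seq_compact[OF compact_range_pmf_vec]] assms
    by blast
  then obtain V where "finite V" "V \<subseteq> range ?vec" and cover: "range ?vec \<subseteq> (\<Union>v\<in>V. ball v \<rho>)"
    by blast
  obtain C where "finite C" and V: "V = ?vec ` C"
    using finite_subset_image[OF \<open>finite V\<close> \<open>V \<subseteq> range ?vec\<close>] by blast
  have "\<exists>c\<in>C. \<forall>x. \<bar>pmf c x - pmf \<nu> x\<bar> < \<rho>" for \<nu>
  proof -
    have "?vec \<nu> \<in> (\<Union>c\<in>C. ball (?vec c) \<rho>)"
      using cover unfolding V by blast
    then obtain c where "c \<in> C" and "dist (?vec c) (?vec \<nu>) < \<rho>"
      by auto
    moreover have "\<bar>pmf c x - pmf \<nu> x\<bar> \<le> dist (?vec c) (?vec \<nu>)" for x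
      using component_le_norm_cart[of "?vec c - ?vec \<nu>" x] by (simp add: dist_norm)
    ultimately show ?thesis
      by (blast intro: le_less_trans)
  qed
  with \<open>finite C\<close> show thesis by (rule that)
qed

lemma wass_pow_finite_net:
  assumes "0 < \<eta>"
  obtains C :: "'a::{metric_space,finite} pmf set"
  where "finite C" and "\<And>\<nu>. \<exists>c\<in>C. wass_pow p c \<nu> < \<eta>"
proof -
  define D where "D = Max (range (\<lambda>(x :: 'a, y). dist x y powr p))"
  have D: "dist x y powr p \<le> D" for x y :: 'a
    unfolding D_def by (rule Max_ge) (auto intro: image_eqI[where x = "(x, y)"])
  have "0 \<le> D" using D[of undefined undefined] by simp
  define N where "N = real CARD('a)"
  have "0 \<le> N" by (simp add: N_def)
  define \<rho> where "\<rho> = \<eta> / ((D + 1) * (N + 1))"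
  have "0 < \<rho>" using assms \<open>0 \<le> D\<close> by (simp add: \<rho>_def N_def)
  then obtain C :: "'a pmf set" where "finite C" and net: "\<And>\<nu>. \<exists>c\<in>C. \<forall>x. \<bar>pmf c x - pmf \<nu> x\<bar> < \<rho>"
    using finite_pmf_net by blast
  have "\<exists>c\<in>C. wass_pow p c \<nu> < \<eta>" for \<nu>
  proof -
    obtain c where "c \<in> C" and close: "\<forall>x. \<bar>pmf c x - pmf \<nu> x\<bar> < \<rho>"
      using net by blast
    have "wass_pow p c \<nu> \<le> D * (\<Sum>x\<in>UNIV. \<bar>pmf c x - pmf \<nu> x\<bar>)"
      by (rule wass_pow_le_l1_dist[OF D])
    also have "\<dots> \<le> D * (N * \<rho>)"
      using close \<open>0 \<le> D\<close> unfolding N_def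
      by (intro mult_left_mono) (auto intro: sum_bounded_above less_imp_le)
    also have "\<dots> = D * N * (\<eta> / ((D + 1) * (N + 1)))"
      by (simp add: \<rho>_def)
    also have "\<dots> < (D + 1) * (N + 1) * (\<eta> / ((D + 1) * (N + 1)))"
      using \<open>0 < \<rho>\<close> \<open>0 \<le> D\<close> \<open>0 \<le> N\<close> unfolding \<rho>_def
      by (intro mult_strict_right_mono) (auto simp: algebra_simps)
    also have "\<dots> = \<eta>"
      using \<open>0 \<le> D\<close> \<open>0 \<le> N\<close> by simp
    finally show ?thesis using \<open>c \<in> C\<close> by blast
  qed
  with \<open>finite C\<close> show thesis by (rule that)
qed

lemma dense_seq_prefix_net:
  fixes \<mu> :: "nat \<Rightarrow> 'a::{metric_space,finite} pmf"
  assumes dense: "\<And>\<nu> \<epsilon>. 0 < \<epsilon> \<Longrightarrow> \<exists>k\<ge>1. wass_pow p (\<mu> k) \<nu> < \<epsilon>"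
    and "0 < \<eta>"
  shows "\<exists>J. \<forall>\<nu>. \<exists>k\<in>{1..J}. wass_pow p (\<mu> k) \<nu> < \<eta>"
proof -
  obtain K where "0 \<le> K"
    and tri: "\<And>x y z :: 'a. dist x z powr p \<le> dist x y powr p + K * dist y z powr p"
    using finite_cost_quasi_triangle[of p] by blast
  have "0 < \<eta> / (2 * (K + 1))" using \<open>0 < \<eta>\<close> \<open>0 \<le> K\<close> by simp
  then obtain C :: "'a pmf set" where "finite C" and net: "\<And>\<nu>. \<exists>c\<in>C. wass_pow p c \<nu> < \<eta> / (2 * (K + 1))"
    using wass_pow_finite_net by blast
  obtain k where k: "\<And>c. 1 \<le> k c \<and> wass_pow p (\<mu> (k c)) c < \<eta> / 2"
    using dense[of "\<eta> / 2"] \<open>0 < \<eta>\<close> by (metis half_gt_zero)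
  have "\<exists>i\<in>{1..Max (insert 1 (k ` C))}. wass_pow p (\<mu> i) \<nu> < \<eta>" for \<nu>
  proof -
    obtain c where "c \<in> C" and c: "wass_pow p c \<nu> < \<eta> / (2 * (K + 1))"
      using net by blast
    have "wass_pow p (\<mu> (k c)) \<nu> \<le> wass_pow p (\<mu> (k c)) c + K * wass_pow p c \<nu>"
      by (rule wass_pow_quasi_triangle[OF \<open>0 \<le> K\<close> tri])
    also have "\<dots> < \<eta> / 2 + K * (\<eta> / (2 * (K + 1)))"
      using k[of c] c \<open>0 \<le> K\<close> by (intro add_less_le_mono mult_left_mono) auto
    also have "\<dots> \<le> \<eta>"
      using \<open>0 < \<eta>\<close> \<open>0 \<le> K\<close> by (simp add: field_simps)
    finally show ?thesis
      using k[of c] \<open>c \<in> C\<close> \<open>finite C\<close> by (intro bexI[of _ "k c"]) auto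
  qed
  then show ?thesis by blast
qed

lemma abs_diff_Max_le:
  fixes g :: "'i \<Rightarrow> real"
  assumes "finite I" "k \<in> I" "\<And>i. i \<in> I \<Longrightarrow> g i \<le> F" "F - g k \<le> e"
  shows "\<bar>F - (MAX i\<in>I. g i)\<bar> \<le> e"
proof -
  have "g k \<le> (MAX i\<in>I. g i)" using assms(1,2) by (intro Max_ge) auto
  moreover have "(MAX i\<in>I. g i) \<le> F" using assms(1-3) by (subst Max_le_iff) auto
  ultimately show ?thesis using assms(4) by linarith
qed

lemma SUP_abs_tendsto_zeroI:
  fixes f :: "nat \<Rightarrow> 'b \<Rightarrow> real"
  assumes "\<And>\<epsilon>. 0 < \<epsilon> \<Longrightarrow> \<exists>J. \<forall>j\<ge>J. \<forall>x. \<bar>f j x\<bar> \<le> \<epsilon>"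
  shows "(\<lambda>j. SUP x. \<bar>f j x\<bar>) \<longlonglongrightarrow> 0"
proof (rule LIMSEQ_I)
  fix r :: real assume "0 < r"
  then obtain J where J: "\<forall>j\<ge>J. \<forall>x. \<bar>f j x\<bar> \<le> r / 2"
    using assms[of "r / 2"] by auto
  have "norm ((SUP x. \<bar>f j x\<bar>) - 0) < r" if "J \<le> j" for j
  proof -
    have "(SUP x. \<bar>f j x\<bar>) \<le> r / 2"
      using J that by (intro cSUP_least) auto
    moreover have "\<bar>f j undefined\<bar> \<le> (SUP x. \<bar>f j x\<bar>)"
      using J that by (intro cSUP_upper bdd_aboveI2[where M = "r / 2"]) auto
    ultimately show ?thesis using \<open>0 < r\<close> by simp
  qed
  then show "\<exists>J. \<forall>j\<ge>J. norm ((SUP x. \<bar>f j x\<bar>) - 0) < r" by blast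
qed

lemma SUP_abs_diff_Max_tendsto_zero:
  fixes F :: "'b \<Rightarrow> real" and G d :: "nat \<Rightarrow> 'b \<Rightarrow> real"
  assumes "0 \<le> C"
    and below: "\<And>k x. 1 \<le> k \<Longrightarrow> G k x \<le> F x"
    and gap: "\<And>k x. 1 \<le> k \<Longrightarrow> F x - G k x \<le> C * d k x"
    and net: "\<And>\<eta>. 0 < \<eta> \<Longrightarrow> \<exists>J. \<forall>x. \<exists>k\<in>{1..J}. d k x < \<eta>"
  shows "(\<lambda>j. SUP x. \<bar>F x - (MAX k\<in>{1..j}. G k x)\<bar>) \<longlonglongrightarrow> 0"
proof (rule SUP_abs_tendsto_zeroI)
  fix \<epsilon> :: real assume "0 < \<epsilon>"
  then obtain J where J: "\<forall>x. \<exists>k\<in>{1..J}. d k x < \<epsilon> / (C + 1)"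
    using net[of "\<epsilon> / (C + 1)"] \<open>0 \<le> C\<close> by auto
  have "\<bar>F x - (MAX k\<in>{1..j}. G k x)\<bar> \<le> \<epsilon>" if "J \<le> j" for j x
  proof -
    obtain k where k: "k \<in> {1..J}" "d k x < \<epsilon> / (C + 1)"
      using J by blast
    have "F x - G k x \<le> C * d k x"
      using gap k(1) by auto
    also have "\<dots> \<le> C * (\<epsilon> / (C + 1))"
      using k(2) \<open>0 \<le> C\<close> by (intro mult_left_mono) auto
    also have "\<dots> \<le> \<epsilon>"
      using \<open>0 < \<epsilon>\<close> \<open>0 \<le> C\<close> by (simp add: field_simps)
    finally show ?thesis
      using k(1) that below by (intro abs_diff_Max_le) auto
  qed
  then show "\<exists>J. \<forall>j\<ge>J. \<forall>x. \<bar>F x - (MAX k\<in>{1..j}. G k x)\<bar> \<le> \<epsilon>"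
    by blast
qed

theorem corollaryB7:
  fixes p :: real
    and \<theta> :: "('a::{metric_space,finite}) pmf"
    and \<mu> :: "nat \<Rightarrow> 'a pmf"
    and \<phi> \<psi> :: "nat \<Rightarrow> 'a \<Rightarrow> real"
  assumes "1 < p"
    and dense: "\<forall>\<nu>::'a pmf. \<forall>\<epsilon>>0. \<exists>k\<ge>1. wass p (\<mu> k) \<nu> < \<epsilon>"
    and "\<forall>k\<ge>1. \<psi> k = c_transform p (\<phi> k)"
    and "\<forall>k\<ge>1. \<phi> k = c_transform p (\<psi> k)"
    and "\<forall>k\<ge>1. wass_pow p \<theta> (\<mu> k) = integ (\<mu> k) (\<phi> k) + integ \<theta> (\<psi> k)"
  shows "(\<lambda>j. SUP \<nu>::'a pmf. \<bar>wass_pow p \<theta> \<nu>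
            - (MAX k\<in>{1..j}. integ \<nu> (\<phi> k) + integ \<theta> (\<psi> k))\<bar>)
         \<longlonglongrightarrow> 0"
proof -
  obtain K where "0 \<le> K"
    and tri: "\<And>x y z :: 'a. dist x z powr p \<le> dist x y powr p + K * dist y z powr p"
    using finite_cost_quasi_triangle[of p] by blast
  have dense_pow: "\<exists>k\<ge>1. wass_pow p (\<mu> k) \<nu> < \<epsilon>" if "0 < \<epsilon>" for \<nu> \<epsilon>
  proof -
    have "0 < \<epsilon> powr (1 / p)" using that by simp
    then obtain k where "1 \<le> k" "wass p (\<mu> k) \<nu> < \<epsilon> powr (1 / p)"
      using dense by blast
    then show ?thesis
      using wass_pow_less_if_wass_less[of p \<epsilon>] \<open>1 < p\<close> that by auto
  qed
  show ?thesis
  proof (rule SUP_abs_diff_Max_tendsto_zero)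
    show "0 \<le> 2 * K" using \<open>0 \<le> K\<close> by simp
    show "integ \<nu> (\<phi> k) + integ \<theta> (\<psi> k) \<le> wass_pow p \<theta> \<nu>" if "1 \<le> k" for k \<nu>
      using integ_c_transform_le_wass_pow[of \<theta> p "\<phi> k" \<nu>] assms(3) that by simp
    show "wass_pow p \<theta> \<nu> - (integ \<nu> (\<phi> k) + integ \<theta> (\<psi> k)) \<le> 2 * K * wass_pow p (\<mu> k) \<nu>"
      if "1 \<le> k" for k \<nu>
      using dual_gap_le_wass_pow[OF \<open>0 \<le> K\<close> tri] assms(4,5) that by simp
    show "\<exists>J. \<forall>\<nu>. \<exists>k\<in>{1..J}. wass_pow p (\<mu> k) \<nu> < \<eta>" if "0 < \<eta>" for \<eta>
      using dense_seq_prefix_net[OF dense_pow that] .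
  qed
qed

end
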